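(* Let $M$ be a compact smooth manifold with metric $d_M$, $\phi:M\to M$ a diffeomorphism, $\omega:M\to\mathbb{R}$ continuous, $F:\mathbb{R}^N\times\mathbb{R}\to\mathbb{R}^N$, and let $f:M\to\mathbb{R}^N$ be a synchronization function of the driven system. Fix $K\in\mathbb{N}$ and define $\Gamma_K:M\to\mathbb{R}^{K+1}$ by $\Gamma_K(x)=(\omega(x),\omega(\phi(x)),\dots,\omega(\phi^K(x)))$. Assume $\Gamma_K$ has a separation modulus $\eta$, and let $P:\mathbb{R}^N\to\mathbb{R}^{K+1}$ satisfy \[ \sup_{x\in M}\|P(f(x))-\Gamma_K(x)\|\le\varepsilon \] for some $\varepsilon>0$. Then for every $\delta>0$ with $2\varepsilon<\eta(\delta)$, one has: for all $x,x'\in M$, $f(x)=f(x')$ implies $d_M(x,x')<\delta$.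
   Context: The driven system is $h_{t+1}=F(h_t,\omega(\phi^t(x_0)))$. A synchronization function is a continuous $f:M\to\mathbb{R}^N$ such that (a) $f(\phi(x))=F(f(x),\omega(x))$ for all $x\in M$, and (b) for some compact $K_0\subset\mathbb{R}^N$ and every $x_0\in M$, $h_0\in K_0$, the driven trajectory satisfies $\|h_t-f(\phi^t(x_0))\|\to0$. A separation modulus for a continuous $g:M\to\mathbb{R}^p$ is any nondecreasing function $\eta:(0,\operatorname{diam}(M)]\to(0,\infty)$ such that for all $x,x'\in M$, $d_M(x,x')\ge\delta$ implies $\|g(x)-g(x')\|\ge\eta(\delta)$. *)

theory Defs
  imports "HOL-Analysis.Analysis"
begin

primrec driven_traj ::
  "('h \<times> real \<Rightarrow> 'h) \<Rightarrow> ('a \<Rightarrow> real) \<Rightarrow> ('a \<Rightarrow> 'a) \<Rightarrow> 'a \<Rightarrow> 'h \<Rightarrow> nat \<Rightarrow> 'h" where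
  "driven_traj F \<omega> \<phi> x0 h0 0 = h0"
| "driven_traj F \<omega> \<phi> x0 h0 (Suc t) = F (driven_traj F \<omega> \<phi> x0 h0 t, \<omega> ((\<phi> ^^ t) x0))"

definition sync_function ::
  "'a set \<Rightarrow> ('a \<Rightarrow> 'a) \<Rightarrow> ('a \<Rightarrow> real) \<Rightarrow> ('h::real_normed_vector \<times> real \<Rightarrow> 'h)
     \<Rightarrow> ('a::topological_space \<Rightarrow> 'h) \<Rightarrow> bool" where
  "sync_function M \<phi> \<omega> F f \<longleftrightarrow>
     continuous_on M f \<and>
     (\<forall>x\<in>M. f (\<phi> x) = F (f x, \<omega> x)) \<and>
     (\<exists>K0. compact K0 \<and>
        (\<forall>x0\<in>M. \<forall>h0\<in>K0.
           ((\<lambda>t. norm (driven_traj F \<omega> \<phi> x0 h0 t - f ((\<phi> ^^ t) x0))) \<longlongrightarrow> 0) sequentially))"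

text \<open>Separation modulus of g on M, where the distance on the target space is given
  explicitly by dY(u,v) (intended: the Euclidean norm of u - v).\<close>
definition separation_modulus ::
  "'a::metric_space set \<Rightarrow> ('a \<Rightarrow> 'b) \<Rightarrow> ('b \<Rightarrow> 'b \<Rightarrow> real) \<Rightarrow> (real \<Rightarrow> real) \<Rightarrow> bool" where
  "separation_modulus M g dY \<eta> \<longleftrightarrow>
     mono_on {0<..diameter M} \<eta> \<and>
     (\<forall>\<delta>\<in>{0<..diameter M}. \<eta> \<delta> > 0) \<and>
     (\<forall>\<delta>\<in>{0<..diameter M}. \<forall>x\<in>M. \<forall>x'\<in>M. dist x x' \<ge> \<delta> \<longrightarrow> dY (g x) (g x') \<ge> \<eta> \<delta>)"

text \<open>Vectors of R^(K+1) are represented as functions nat => real, only the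
  coordinates 0..K being relevant; the Euclidean distance on R^(K+1).\<close>
definition distK :: "nat \<Rightarrow> (nat \<Rightarrow> real) \<Rightarrow> (nat \<Rightarrow> real) \<Rightarrow> real" where
  "distK K u v = L2_set (\<lambda>i. u i - v i) {..K}"

definition Gamma :: "nat \<Rightarrow> ('a \<Rightarrow> real) \<Rightarrow> ('a \<Rightarrow> 'a) \<Rightarrow> 'a \<Rightarrow> nat \<Rightarrow> real" where
  "Gamma K \<omega> \<phi> x = (\<lambda>i. if i \<le> K then \<omega> ((\<phi> ^^ i) x) else 0)"

end

theory Submission
  imports Defs
begin

(* If f x = f x', then P (f x) is within \<epsilon> of both Gamma_K x and Gamma_K x', so these two
   delay vectors are within 2\<epsilon> < \<eta> \<delta> of each other; by the separation property x and x'
   cannot be \<delta> apart. *)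

lemma distK_commute: "distK K u v = distK K v u"
  unfolding distK_def L2_set_def by (simp add: power2_commute)

lemma distK_triangle: "distK K u w \<le> distK K u v + distK K v w"
proof -
  have "distK K u w = L2_set (\<lambda>i. (u i - v i) + (v i - w i)) {..K}"
    unfolding distK_def by (intro L2_set_cong) auto
  also have "\<dots> \<le> distK K u v + distK K v w"
    unfolding distK_def by (rule L2_set_triangle_ineq)
  finally show ?thesis .
qed

lemma distK_le_via_common_point:
  assumes "distK K p u \<le> \<epsilon>" and "distK K p v \<le> \<epsilon>"
  shows "distK K u v \<le> 2 * \<epsilon>"
proof -
  have "distK K u v \<le> distK K u p + distK K p v" by (rule distK_triangle)
  also have "distK K u p = distK K p u" by (rule distK_commute)
  finally show ?thesis using assms by linarith
qed

lemma separation_modulus_dist_less: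
  assumes "separation_modulus M g dY \<eta>" and "bounded M"
    and "x \<in> M" and "x' \<in> M" and "\<delta> > 0"
    and "dY (g x) (g x') < \<eta> \<delta>"
  shows "dist x x' < \<delta>"
proof (rule ccontr)
  assume "\<not> dist x x' < \<delta>"
  then have far: "\<delta> \<le> dist x x'" by simp
  also have "dist x x' \<le> diameter M"
    using assms(2-4) by (rule diameter_bounded_bound)
  finally have "\<delta> \<in> {0<..diameter M}" using \<open>\<delta> > 0\<close> by simp
  then have "\<eta> \<delta> \<le> dY (g x) (g x')"
    using assms(1,3,4) far unfolding separation_modulus_def by blast
  with assms(6) show False by linarith
qed

theorem proposition4:
  fixes M :: "'a::metric_space set"
    and \<phi> :: "'a \<Rightarrow> 'a"
    and \<omega> :: "'a \<Rightarrow> real"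
    and F :: "(real^'n) \<times> real \<Rightarrow> real^'n"
    and f :: "'a \<Rightarrow> real^'n"
    and K :: nat
    and \<eta> :: "real \<Rightarrow> real"
    and P :: "real^'n \<Rightarrow> (nat \<Rightarrow> real)"
    and \<epsilon> \<delta> :: real
  assumes "compact M"
    and "\<exists>\<psi>. homeomorphism M M \<phi> \<psi>"
    and "continuous_on M \<omega>"
    and "sync_function M \<phi> \<omega> F f"
    and "separation_modulus M (Gamma K \<omega> \<phi>) (distK K) \<eta>"
    and "\<epsilon> > 0"
    and "\<forall>x\<in>M. distK K (P (f x)) (Gamma K \<omega> \<phi> x) \<le> \<epsilon>"
    and "\<delta> > 0"
    and "2 * \<epsilon> < \<eta> \<delta>"
  shows "\<forall>x\<in>M. \<forall>x'\<in>M. f x = f x' \<longrightarrow> dist x x' < \<delta>"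
proof (intro ballI impI)
  fix x x' assume "x \<in> M" "x' \<in> M" and same_state: "f x = f x'"
  then have "distK K (Gamma K \<omega> \<phi> x) (Gamma K \<omega> \<phi> x') \<le> 2 * \<epsilon>"
    using assms(7) by (metis distK_le_via_common_point)
  then show "dist x x' < \<delta>"
    using separation_modulus_dist_less[OF assms(5) compact_imp_bounded[OF assms(1)]]
      \<open>x \<in> M\<close> \<open>x' \<in> M\<close> assms(8,9) by fastforce
qed

end
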